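(* Let $f\in\mathbb V(\mathcal E_\oplus)$ and set $g:=-2\imath\,\Pi B(A-\imath B^\top TB)^{-1}f$. If $p\in\mathbb V(\Gamma_\oplus)$ solves $(I+\Pi S)p=g$, then $u:=(A-\imath B^\top TB)^{-1}(B^\top Tp+f)$ belongs to $\operatorname{range}(R)$, and $u_\Omega:=(R^\top R)^{-1}R^\top u$ (so that $Ru_\Omega=u$) satisfies $R^\top AR\,u_\Omega=R^\top f$; i.e. $u_\Omega$ is the unique solution of the global system $A_\Omega u_\Omega=f_\Omega$ with $A_\Omega:=R^\top AR$, $f_\Omega:=R^\top f$.
   Context: Let $\mathcal E$ be a finite set, $\mathcal E_1,\dots,\mathcal E_J$ subsets with $\mathcal E=\bigcup_j\mathcal E_j$, $\Sigma:=\bigcup_{1\le j<k\le J}(\mathcal E_j\cap\mathcal E_k)$, $\Gamma$ any set with $\Sigma\subset\Gamma\subset\mathcal E$, $\Gamma_j:=\Gamma\cap\mathcal E_j$. $\mathbb V(\mathcal F):=\mathbb C^{\mathcal F}$; $\mathbb V(\mathcal E_\oplus):=\prod_j\mathbb V(\mathcal E_j)$, $\mathbb V(\Gamma_\oplus):=\prod_j\mathbb V(\Gamma_j)$. Restrictions: $Rx=((x_e)_{e\in\mathcal E_1},\dots,(x_e)_{e\in\mathcal E_J})$ for $x\in\mathbb V(\mathcal E)$ ($R^\top R$ is the diagonal matrix with entries $\#\{j:e\in\mathcal E_j\}\ge1$); $Qx=((x_e)_{e\in\Gamma_1},\dots,(x_e)_{e\in\Gamma_J})$ for $x\in\mathbb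 V(\Gamma)$; $B_jx=(x_e)_{e\in\Gamma_j}$ for $x\in\mathbb V(\mathcal E_j)$, $B:=\mathrm{diag}(B_j)$; $\top$ is the non-conjugated transpose. For each $j$ let $T_j$ be a real symmetric positive definite matrix on $\mathbb V(\Gamma_j)$, $T:=\mathrm{diag}(T_1,\dots,T_J)$, $P:=Q(Q^\top TQ)^{-1}Q^\top T$, $\Pi:=2P-I$. Let $A=\mathrm{diag}(A_1,\dots,A_J)$, $A_j\in\mathbb C^{\mathcal E_j\times\mathcal E_j}$, satisfying (A1) $\operatorname{Im}(\bar v^\top Av)\le0$ for all $v\in\mathbb V(\mathcal E_\oplus)$ and (A2) $R^\top AR$ invertible; then $A-\imath B^\top TB$ is invertible. Scattering matrix: $S:=I+2\imath B(A-\imath B^\top TB)^{-1}B^\top T$. *)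

theory Defs
  imports Complex_Main
begin

text \<open>Vectors in V(F) (F a subset of the finite ground set) are functions
  'e => complex vanishing outside F.  Vectors in the product spaces
  V(E_plus) = prod_j V(E_j) are functions nat => 'e => complex, component j
  (for j < J) supported on E_j, and zero for j >= J.  Block-diagonal matrices
  are given blockwise by their entries nat => 'e => 'e => _ .\<close>

definition vec_on :: "'e set \<Rightarrow> ('e \<Rightarrow> complex) \<Rightarrow> bool" where
  "vec_on F x \<longleftrightarrow> (\<forall>e. e \<notin> F \<longrightarrow> x e = 0)"

definition bvec :: "nat \<Rightarrow> (nat \<Rightarrow> 'e set) \<Rightarrow> (nat \<Rightarrow> 'e \<Rightarrow> complex) \<Rightarrow> bool" where
  "bvec J F v \<longleftrightarrow> (\<forall>j e. (J \<le> j \<or> e \<notin> F j) \<longrightarrow> v j e = 0)"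

text \<open>Restriction x |-> ((x_e)_{e in F_1}, ..., (x_e)_{e in F_J})  (the maps R and Q).\<close>
definition restr :: "nat \<Rightarrow> (nat \<Rightarrow> 'e set) \<Rightarrow> ('e \<Rightarrow> complex) \<Rightarrow> nat \<Rightarrow> 'e \<Rightarrow> complex" where
  "restr J F x = (\<lambda>j e. if j < J \<and> e \<in> F j then x e else 0)"

text \<open>Its (non-conjugated) transpose: (restrT v)_e = sum over j with e in F_j of v_j(e).\<close>
definition restrT :: "nat \<Rightarrow> (nat \<Rightarrow> 'e set) \<Rightarrow> (nat \<Rightarrow> 'e \<Rightarrow> complex) \<Rightarrow> 'e \<Rightarrow> complex" where
  "restrT J F v = (\<lambda>e. \<Sum>j\<in>{j. j < J \<and> e \<in> F j}. v j e)"

text \<open>Blockwise restriction to G_j subset of E_j (the map B) and its transpose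
  (extension by zero, B^T); as functions on our representation both are masking.\<close>
definition bmask :: "nat \<Rightarrow> (nat \<Rightarrow> 'e set) \<Rightarrow> (nat \<Rightarrow> 'e \<Rightarrow> complex) \<Rightarrow> nat \<Rightarrow> 'e \<Rightarrow> complex" where
  "bmask J G v = (\<lambda>j e. if j < J \<and> e \<in> G j then v j e else 0)"

definition bapply :: "nat \<Rightarrow> (nat \<Rightarrow> 'e set) \<Rightarrow> (nat \<Rightarrow> 'e \<Rightarrow> 'e \<Rightarrow> complex)
    \<Rightarrow> (nat \<Rightarrow> 'e \<Rightarrow> complex) \<Rightarrow> nat \<Rightarrow> 'e \<Rightarrow> complex" where
  "bapply J F M v = (\<lambda>j e. if j < J \<and> e \<in> F j then (\<Sum>e'\<in>F j. M j e e' * v j e') else 0)"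

text \<open>Inverse of an operator L on a carrier C (meaningful when L is bijective on C).\<close>
definition op_inv :: "'a set \<Rightarrow> ('a \<Rightarrow> 'a) \<Rightarrow> 'a \<Rightarrow> 'a" where
  "op_inv C L y = (THE x. x \<in> C \<and> L x = y)"

definition op_invertible_on :: "'a set \<Rightarrow> ('a \<Rightarrow> 'a) \<Rightarrow> bool" where
  "op_invertible_on C L \<longleftrightarrow> (\<forall>y\<in>C. \<exists>!x. x \<in> C \<and> L x = y)"


text \<open>The objects of the paper, for data J, E_j (Ej), Gamma (G), blocks A_j (Am), T_j (Tm).\<close>

definition Gj :: "(nat \<Rightarrow> 'e set) \<Rightarrow> 'e set \<Rightarrow> nat \<Rightarrow> 'e set" where
  "Gj Ej G = (\<lambda>j. G \<inter> Ej j)"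

definition Aop :: "nat \<Rightarrow> (nat \<Rightarrow> 'e set) \<Rightarrow> (nat \<Rightarrow> 'e \<Rightarrow> 'e \<Rightarrow> complex)
    \<Rightarrow> (nat \<Rightarrow> 'e \<Rightarrow> complex) \<Rightarrow> nat \<Rightarrow> 'e \<Rightarrow> complex" where
  "Aop J Ej Am = bapply J Ej Am"

definition Top :: "nat \<Rightarrow> (nat \<Rightarrow> 'e set) \<Rightarrow> 'e set \<Rightarrow> (nat \<Rightarrow> 'e \<Rightarrow> 'e \<Rightarrow> real)
    \<Rightarrow> (nat \<Rightarrow> 'e \<Rightarrow> complex) \<Rightarrow> nat \<Rightarrow> 'e \<Rightarrow> complex" where
  "Top J Ej G Tm = bapply J (Gj Ej G) (\<lambda>j e e'. complex_of_real (Tm j e e'))"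

definition Bop where "Bop J Ej G = bmask J (Gj Ej G)"
definition BopT where "BopT J Ej G = bmask J (Gj Ej G)"

definition Mop where
  "Mop J Ej G Am Tm = (\<lambda>v j e. Aop J Ej Am v j e
       - \<i> * BopT J Ej G (Top J Ej G Tm (Bop J Ej G v)) j e)"
definition Minv where
  "Minv J Ej G Am Tm = op_inv {v. bvec J Ej v} (Mop J Ej G Am Tm)"

definition Sop where
  "Sop J Ej G Am Tm = (\<lambda>q j e. q j e + 2 * \<i> *
       Bop J Ej G (Minv J Ej G Am Tm (BopT J Ej G (Top J Ej G Tm q))) j e)"

definition Pop where
  "Pop J Ej G Tm = (\<lambda>q. restr J (Gj Ej G)
       (op_inv {x. vec_on G x} (\<lambda>x. restrT J (Gj Ej G) (Top J Ej G Tm (restr J (Gj Ej G) x)))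
          (restrT J (Gj Ej G) (Top J Ej G Tm q))))"
definition PiOp where
  "PiOp J Ej G Tm = (\<lambda>q j e. 2 * Pop J Ej G Tm q j e - q j e)"

end

theory Submission
  imports Defs "HOL-Library.Function_Algebras"
begin

text \<open>
  On the kernel of M = A - i B^T T B, assumption (A1) makes the positive definite form of T
  on the trace B v nonpositive, so v vanishes on Gamma; being then consistent across the
  subdomains, v is R of its averaged gluing, and (A2) forces v = 0.  In finite dimension
  this makes M, and likewise Q^T T Q, invertible, so P is linear.
  Substituting S, the interface equation becomes P (p + 2 i B u) = i B u.  Hence B u lies in
  the range of Q, so u agrees on every interface (Gamma contains Sigma) and is R of its
  gluing; and Q^T T (p + i B u) = 0, which is exactly the cancellation of the interface
  terms in R^T A u = R^T (B^T T p + f + i B^T T B u).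
\<close>

context vector_space
begin

lemma op_invertible_on_if_trivial_kernel:
  assumes L: "Vector_Spaces.linear scale scale L" and C: "subspace C"
    and D: "finite D" "C \<subseteq> span D" and LC: "L ` C \<subseteq> C"
    and ker: "\<And>x. x \<in> C \<Longrightarrow> L x = 0 \<Longrightarrow> x = 0"
  shows "op_invertible_on C L"
proof -
  interpret L: Vector_Spaces.linear scale scale L by (rule L)
  have inj: "inj_on L C" using L.inj_on_iff_eq_0[OF C] ker by blast
  obtain B where B: "B \<subseteq> C" "independent B" "C \<subseteq> span B"
    by (rule basis_exists[of C])
  have finB: "finite B" using independent_span_bound[OF D(1) B(2)] B(1) D(2) by auto
  have spanB: "span B = C" using span_subspace[OF B(1,3) C] .
  have indep: "independent (L ` B)"
    using L.independent_injective_image[OF B(2)] inj spanB by simp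
  have card_LB: "card (L ` B) = card B" using card_image[OF inj_on_subset[OF inj B(1)]] .
  \<comment> \<open>a vector of C outside L ` C would extend L ` B to an independent set larger than the basis B\<close>
  have onto: "y \<in> L ` C" if "y \<in> C" for y
  proof (rule ccontr)
    assume "y \<notin> L ` C"
    then have y: "y \<notin> span (L ` B)" by (simp add: L.span_image spanB)
    have "insert y (L ` B) \<subseteq> span B" using that LC B(1) spanB by blast
    then have "card (insert y (L ` B)) \<le> card B"
      using independent_span_bound[OF finB independent_insertI[OF y indep]] by blast
    moreover have "y \<notin> L ` B" using y span_base by metis
    ultimately show False using card_LB finB by simp
  qed
  show ?thesis
    unfolding op_invertible_on_def
  proof
    fix y assume "y \<in> C"
    then obtain x where "x \<in> C" "L x = y" using onto by blast
    then show "\<exists>!x. x \<in> C \<and> L x = y" using inj by (auto dest: inj_onD)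
  qed
qed

end

lemma op_inv_in:
  assumes "op_invertible_on C L" "y \<in> C"
  shows "op_inv C L y \<in> C"
  using theI'[of "\<lambda>x. x \<in> C \<and> L x = y"] assms
  by (simp add: op_inv_def op_invertible_on_def)

lemma apply_op_inv:
  assumes "op_invertible_on C L" "y \<in> C"
  shows "L (op_inv C L y) = y"
  using theI'[of "\<lambda>x. x \<in> C \<and> L x = y"] assms
  by (simp add: op_inv_def op_invertible_on_def)

lemma op_inv_eqI:
  assumes "op_invertible_on C L" "y \<in> C" "x \<in> C" "L x = y"
  shows "op_inv C L y = x"
  unfolding op_inv_def
proof (rule the_equality)
  show "x \<in> C \<and> L x = y" using assms(3,4) ..
  show "x' = x" if "x' \<in> C \<and> L x' = y" for x'
    using assms that unfolding op_invertible_on_def by blast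
qed

lemma op_inv_add:
  fixes L :: "'a \<Rightarrow> 'a::plus"
  assumes "op_invertible_on C L" "\<And>x y. L (x + y) = L x + L y"
    and "\<And>x y. x \<in> C \<Longrightarrow> y \<in> C \<Longrightarrow> x + y \<in> C" and "a \<in> C" "b \<in> C"
  shows "op_inv C L (a + b) = op_inv C L a + op_inv C L b"
  using assms by (intro op_inv_eqI) (simp_all add: op_inv_in apply_op_inv)

lemma op_inv_scale:
  assumes "op_invertible_on C L" "\<And>x. L (s x) = s (L x)"
    and "\<And>x. x \<in> C \<Longrightarrow> s x \<in> C" and "a \<in> C"
  shows "op_inv C L (s a) = s (op_inv C L a)"
  using assms by (intro op_inv_eqI) (simp_all add: op_inv_in apply_op_inv)

definition cscale :: "complex \<Rightarrow> ('a \<Rightarrow> complex) \<Rightarrow> 'a \<Rightarrow> complex" where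
  "cscale c x = (\<lambda>a. c * x a)"

definition bscale :: "complex \<Rightarrow> ('b \<Rightarrow> 'a \<Rightarrow> complex) \<Rightarrow> 'b \<Rightarrow> 'a \<Rightarrow> complex" where
  "bscale c v = (\<lambda>j. cscale c (v j))"

lemma vector_space_cscale: "vector_space (cscale :: complex \<Rightarrow> ('a \<Rightarrow> complex) \<Rightarrow> _)"
  by unfold_locales (simp_all add: cscale_def fun_eq_iff distrib_left distrib_right)

lemma vector_space_bscale: "vector_space (bscale :: complex \<Rightarrow> ('b \<Rightarrow> 'a \<Rightarrow> complex) \<Rightarrow> _)"
  by unfold_locales (simp_all add: bscale_def cscale_def fun_eq_iff distrib_left distrib_right)

lemma sum_fun_apply: "sum f A x = (\<Sum>a\<in>A. f a x)"
  by (induction A rule: infinite_finite_induct) auto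

lemma op_invertible_on_vec_onI:
  assumes F: "finite F"
    and add: "\<And>x y. L (x + y) = L x + L y" and scale: "\<And>c x. L (cscale c x) = cscale c (L x)"
    and into: "\<And>x. vec_on F x \<Longrightarrow> vec_on F (L x)"
    and ker: "\<And>x. vec_on F x \<Longrightarrow> L x = 0 \<Longrightarrow> x = 0"
  shows "op_invertible_on {x. vec_on F x} L"
proof -
  interpret vector_space cscale by (rule vector_space_cscale)
  define unit where "unit a = (\<lambda>b. if b = a then 1 else 0 :: complex)" for a :: 'a
  have "x \<in> span (unit ` F)" if "vec_on F x" for x
  proof -
    have "x = (\<Sum>a\<in>F. cscale (x a) (unit a))"
      using that F
      by (auto simp: fun_eq_iff sum_fun_apply cscale_def unit_def vec_on_def if_distrib sum.delta cong: if_cong)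
    also have "\<dots> \<in> span (unit ` F)"
      by (intro span_sum span_scale span_base) auto
    finally show ?thesis .
  qed
  moreover have "subspace {x. vec_on F x}"
    by (auto simp: subspace_def vec_on_def cscale_def)
  moreover have "Vector_Spaces.linear cscale cscale L"
    using add scale vector_space_cscale by (simp add: Vector_Spaces.linear_iff)
  ultimately show ?thesis
    using F into ker by (intro op_invertible_on_if_trivial_kernel[where D = "unit ` F"]) auto
qed

lemma op_invertible_on_bvecI:
  assumes F: "finite (Sigma {..<J} F)"
    and add: "\<And>v w. L (v + w) = L v + L w" and scale: "\<And>c v. L (bscale c v) = bscale c (L v)"
    and into: "\<And>v. bvec J F v \<Longrightarrow> bvec J F (L v)"
    and ker: "\<And>v. bvec J F v \<Longrightarrow> L v = 0 \<Longrightarrow> v = 0"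
  shows "op_invertible_on {v. bvec J F v} L"
proof -
  interpret vector_space bscale by (rule vector_space_bscale)
  define unit :: "nat \<times> 'a \<Rightarrow> nat \<Rightarrow> 'a \<Rightarrow> complex"
    where "unit = (\<lambda>(j, a) k b. if k = j \<and> b = a then 1 else 0)"
  have "v \<in> span (unit ` Sigma {..<J} F)" if v: "bvec J F v" for v
  proof -
    have "v = (\<Sum>(j, a)\<in>Sigma {..<J} F. bscale (v j a) (unit (j, a)))"
    proof (intro ext)
      fix k b
      have "(\<Sum>(j, a)\<in>Sigma {..<J} F. bscale (v j a) (unit (j, a))) k b
          = (\<Sum>x\<in>Sigma {..<J} F. if x = (k, b) then v k b else 0)"
        unfolding sum_fun_apply by (rule sum.cong) (auto simp: bscale_def cscale_def unit_def split: if_splits)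
      also have "\<dots> = v k b" using v F by (simp add: sum.delta bvec_def) (meson not_le)
      finally show "v k b = (\<Sum>(j, a)\<in>Sigma {..<J} F. bscale (v j a) (unit (j, a))) k b" by simp
    qed
    also have "\<dots> \<in> span (unit ` Sigma {..<J} F)"
      by (rule span_sum, clarify, rule span_scale, rule span_base) force
    finally show ?thesis .
  qed
  moreover have "subspace {v. bvec J F v}"
    by (simp add: subspace_def bvec_def bscale_def cscale_def)
  moreover have "Vector_Spaces.linear bscale bscale L"
    using add scale vector_space_bscale by (simp add: Vector_Spaces.linear_iff)
  ultimately show ?thesis
    using F into ker by (intro op_invertible_on_if_trivial_kernel[where D = "unit ` Sigma {..<J} F"]) auto
qed

lemma bapply_add: "bapply J F M (v + w) = bapply J F M v + bapply J F M w"
  by (auto simp: bapply_def fun_eq_iff sum.distrib algebra_simps)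

lemma bapply_bscale: "bapply J F M (bscale c v) = bscale c (bapply J F M v)"
  by (auto simp: bapply_def fun_eq_iff bscale_def cscale_def sum_distrib_left algebra_simps)

lemma bmask_add: "bmask J F (v + w) = bmask J F v + bmask J F w"
  by (auto simp: bmask_def fun_eq_iff)

lemma bmask_bscale: "bmask J F (bscale c v) = bscale c (bmask J F v)"
  by (auto simp: bmask_def fun_eq_iff bscale_def cscale_def)

lemma restr_add: "restr J F (x + y) = restr J F x + restr J F y"
  by (auto simp: restr_def fun_eq_iff)

lemma restr_cscale: "restr J F (cscale c x) = bscale c (restr J F x)"
  by (auto simp: restr_def fun_eq_iff bscale_def cscale_def)

lemma restrT_add: "restrT J F (v + w) = restrT J F v + restrT J F w"
  by (auto simp: restrT_def fun_eq_iff sum.distrib)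

lemma restrT_bscale: "restrT J F (bscale c v) = cscale c (restrT J F v)"
  by (auto simp: restrT_def fun_eq_iff bscale_def cscale_def sum_distrib_left)

lemma vec_on_restrT: "vec_on (\<Union>j<J. F j) (restrT J F v)"
  by (auto simp: vec_on_def restrT_def intro!: sum.neutral)

lemma restrT_bmask:
  assumes "\<And>j. j < J \<Longrightarrow> H j \<subseteq> F j"
  shows "restrT J F (bmask J H v) = restrT J H v"
proof
  fix e
  have "{j. j < J \<and> e \<in> H j} \<subseteq> {j. j < J \<and> e \<in> F j}" using assms by blast
  then show "restrT J F (bmask J H v) e = restrT J H v e"
    unfolding restrT_def bmask_def
    by (intro sum.mono_neutral_cong_right) auto
qed

lemma sum_mult_restrT:
  assumes "finite H" "\<And>j. j < J \<Longrightarrow> F j \<subseteq> H"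
  shows "(\<Sum>e\<in>H. y e * restrT J F v e) = (\<Sum>j<J. \<Sum>e\<in>F j. y e * v j e)"
proof -
  have "(\<Sum>e\<in>H. y e * restrT J F v e) = (\<Sum>e\<in>H. \<Sum>j\<in>{j\<in>{..<J}. e \<in> F j}. y e * v j e)"
    by (simp add: restrT_def sum_distrib_left)
  also have "\<dots> = (\<Sum>j<J. \<Sum>e\<in>{e\<in>H. e \<in> F j}. y e * v j e)"
    by (rule sum.swap_restrict[OF assms(1)]) simp
  also have "\<dots> = (\<Sum>j<J. \<Sum>e\<in>F j. y e * v j e)"
    using assms(2) by (intro sum.cong refl arg_cong[where f = "\<lambda>S. sum _ S"]) auto
  finally show ?thesis .
qed

definition qform :: "'a set \<Rightarrow> ('a \<Rightarrow> 'a \<Rightarrow> real) \<Rightarrow> ('a \<Rightarrow> real) \<Rightarrow> real" where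
  "qform F T y = (\<Sum>e\<in>F. \<Sum>e'\<in>F. y e * T e e' * y e')"

definition pos_def_on :: "'a set \<Rightarrow> ('a \<Rightarrow> 'a \<Rightarrow> real) \<Rightarrow> bool" where
  "pos_def_on F T \<longleftrightarrow> (\<forall>x. (\<forall>e. e \<notin> F \<longrightarrow> x e = 0) \<and> x \<noteq> (\<lambda>_. 0) \<longrightarrow> qform F T x > 0)"

lemma qform_restrict: "qform F T y = qform F T (\<lambda>e. if e \<in> F then y e else 0)"
  unfolding qform_def by (intro sum.cong refl) auto

lemma qform_pos:
  assumes "pos_def_on F T" "e \<in> F" "y e \<noteq> 0"
  shows "0 < qform F T y"
proof -
  have "(\<lambda>e. if e \<in> F then y e else 0) \<noteq> (\<lambda>_. 0)" using assms(2,3) by (auto simp: fun_eq_iff)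
  then have "0 < qform F T (\<lambda>e. if e \<in> F then y e else 0)"
    using spec[OF assms(1)[unfolded pos_def_on_def], of "\<lambda>e. if e \<in> F then y e else 0"] by simp
  then show ?thesis using qform_restrict[of F T y] by simp
qed

lemma qform_nonneg:
  assumes "pos_def_on F T"
  shows "0 \<le> qform F T y"
proof (cases "\<exists>e\<in>F. y e \<noteq> 0")
  case True
  then show ?thesis using qform_pos[OF assms] by (meson less_imp_le)
next
  case False
  then show ?thesis by (simp add: qform_def)
qed

lemma qform_eq_0_imp_zero:
  assumes "pos_def_on F T" "qform F T y = 0" "e \<in> F"
  shows "y e = 0"
  using qform_pos[OF assms(1,3), of y] assms(2) by linarith

text \<open>The cross terms in Re z and Im z cancel by symmetry of T.\<close>
lemma hermitian_form_eq_qform: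
  fixes T :: "'a \<Rightarrow> 'a \<Rightarrow> real" and z :: "'a \<Rightarrow> complex"
  assumes "finite F" and sym: "\<forall>e\<in>F. \<forall>e'\<in>F. T e e' = T e' e"
  shows "(\<Sum>e\<in>F. \<Sum>e'\<in>F. cnj (z e) * (complex_of_real (T e e') * z e'))
    = complex_of_real (qform F T (\<lambda>e. Re (z e)) + qform F T (\<lambda>e. Im (z e)))" (is "?l = ?r")
proof (rule complex_eqI)
  show "Re ?l = Re ?r" by (simp add: qform_def Re_sum sum.distrib algebra_simps)
  have "(\<Sum>e\<in>F. \<Sum>e'\<in>F. T e e' * (Re (z e) * Im (z e')))
      = (\<Sum>e'\<in>F. \<Sum>e\<in>F. T e' e * (Im (z e') * Re (z e)))"
    using sym by (subst sum.swap) (auto simp: mult_ac intro!: sum.cong)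
  then show "Im ?l = Im ?r" by (simp add: qform_def Im_sum sum.distrib sum_subtractf algebra_simps)
qed

lemma sum_qforms_nonpos_imp_zero:
  fixes J :: nat
  assumes pd: "\<forall>j<J. pos_def_on (F j) (T j)"
    and le: "(\<Sum>j<J. qform (F j) (T j) (\<lambda>e. Re (z j e)) + qform (F j) (T j) (\<lambda>e. Im (z j e))) \<le> 0"
    and "j < J" "e \<in> F j"
  shows "z j e = 0"
proof -
  define q where "q k = qform (F k) (T k) (\<lambda>e. Re (z k e)) + qform (F k) (T k) (\<lambda>e. Im (z k e))" for k
  have nonneg: "0 \<le> q k" if "k < J" for k
    using pd that by (simp add: q_def qform_nonneg add_nonneg_nonneg)
  then have "sum q {..<J} = 0"
    using le sum_nonneg[of "{..<J}" q] unfolding q_def by fastforce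
  then have "\<forall>k\<in>{..<J}. q k = 0" using nonneg sum_nonneg_eq_0_iff[of "{..<J}" q] by simp
  then have "q j = 0" using \<open>j < J\<close> by simp
  then have "qform (F j) (T j) (\<lambda>e. Re (z j e)) = 0" "qform (F j) (T j) (\<lambda>e. Im (z j e)) = 0"
    using pd \<open>j < J\<close> qform_nonneg[of "F j" "T j"] unfolding q_def by (meson add_nonneg_eq_0_iff)+
  then have "Re (z j e) = 0" "Im (z j e) = 0"
    using pd \<open>j < J\<close> \<open>e \<in> F j\<close> qform_eq_0_imp_zero[of "F j" "T j"] by blast+
  then show ?thesis by (simp add: complex_eq_iff)
qed

text \<open>glue J F v = (R^T R)^{-1} R^T v, where R^T R counts the subdomains F j containing e.\<close>
definition glue :: "nat \<Rightarrow> (nat \<Rightarrow> 'e set) \<Rightarrow> (nat \<Rightarrow> 'e \<Rightarrow> complex) \<Rightarrow> 'e \<Rightarrow> complex" where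
  "glue J F v = (\<lambda>e. restrT J F v e / of_nat (card {j. j < J \<and> e \<in> F j}))"

lemma vec_on_glue: "vec_on (\<Union>j<J. F j) (glue J F v)"
  using vec_on_restrT[where J = J and F = F and v = v] by (simp add: vec_on_def glue_def)

lemma restr_glue:
  assumes "bvec J F v"
    and consistent: "\<And>j k e. j < J \<Longrightarrow> k < J \<Longrightarrow> e \<in> F j \<Longrightarrow> e \<in> F k \<Longrightarrow> v j e = v k e"
  shows "restr J F (glue J F v) = v"
proof (intro ext)
  fix j e
  show "restr J F (glue J F v) j e = v j e"
  proof (cases "j < J \<and> e \<in> F j")
    case True
    let ?K = "{k. k < J \<and> e \<in> F k}"
    have "finite ?K" by (rule finite_subset[of _ "{..<J}"]) auto
    moreover have "j \<in> ?K" using True by simp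
    ultimately have "card ?K \<noteq> 0" by auto
    have "restrT J F v e = (\<Sum>k\<in>?K. v j e)"
      unfolding restrT_def using True consistent by (intro sum.cong) auto
    then show ?thesis using True \<open>card ?K \<noteq> 0\<close> by (simp add: restr_def glue_def)
  next
    case False
    then show ?thesis using assms(1) by (auto simp: restr_def bvec_def)
  qed
qed

lemma Top_add: "Top J Ej G Tm (v + w) = Top J Ej G Tm v + Top J Ej G Tm w"
  by (simp add: Top_def bapply_add)

lemma Top_bscale: "Top J Ej G Tm (bscale c v) = bscale c (Top J Ej G Tm v)"
  by (simp add: Top_def bapply_bscale)

lemma Top_zero: "Top J Ej G Tm 0 = 0"
  by (simp add: Top_def bapply_def fun_eq_iff)

lemma Mop_eq: "Mop J Ej G Am Tm v = Aop J Ej Am v - bscale \<i> (BopT J Ej G (Top J Ej G Tm (Bop J Ej G v)))"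
  by (simp add: Mop_def fun_eq_iff bscale_def cscale_def)

lemma Mop_add: "Mop J Ej G Am Tm (v + w) = Mop J Ej G Am Tm v + Mop J Ej G Am Tm w"
  unfolding Mop_eq Aop_def Bop_def BopT_def
  by (simp add: bapply_add bmask_add Top_add fun_eq_iff bscale_def cscale_def algebra_simps)

lemma Mop_bscale: "Mop J Ej G Am Tm (bscale c v) = bscale c (Mop J Ej G Am Tm v)"
  unfolding Mop_eq Aop_def Bop_def BopT_def
  by (simp only: bapply_bscale bmask_bscale Top_bscale) (simp add: fun_eq_iff bscale_def cscale_def algebra_simps)

lemma bvec_Mop: "bvec J Ej (Mop J Ej G Am Tm v)"
  by (auto simp: Mop_def bvec_def Aop_def bapply_def BopT_def bmask_def Gj_def)

locale scattering_data =
  fixes E :: "'e set" and J :: nat and Ej :: "nat \<Rightarrow> 'e set" and G :: "'e set"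
    and Am :: "nat \<Rightarrow> 'e \<Rightarrow> 'e \<Rightarrow> complex" and Tm :: "nat \<Rightarrow> 'e \<Rightarrow> 'e \<Rightarrow> real"
  assumes finite_E: "finite E"
    and cover: "E = (\<Union>j<J. Ej j)"
    and Sigma_sub: "(\<Union>j<J. \<Union>k\<in>{j<..<J}. Ej j \<inter> Ej k) \<subseteq> G"
    and G_sub: "G \<subseteq> E"
    and T_sym: "\<forall>j<J. \<forall>e\<in>Gj Ej G j. \<forall>e'\<in>Gj Ej G j. Tm j e e' = Tm j e' e"
    and T_pd: "\<forall>j<J. pos_def_on (Gj Ej G j) (Tm j)"
    and A1: "\<forall>v. bvec J Ej v \<longrightarrow> Im (\<Sum>j<J. \<Sum>e\<in>Ej j. cnj (v j e) * Aop J Ej Am v j e) \<le> 0"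
    and A2: "op_invertible_on {x. vec_on E x} (\<lambda>x. restrT J Ej (Aop J Ej Am (restr J Ej x)))"
begin

abbreviation "\<Gamma> \<equiv> Gj Ej G"
abbreviation "T \<equiv> Top J Ej G Tm"
abbreviation "M \<equiv> Mop J Ej G Am Tm"
abbreviation "K \<equiv> \<lambda>x. restrT J \<Gamma> (T (restr J \<Gamma> x))"

lemma finite_Ej: "j < J \<Longrightarrow> finite (Ej j)"
  by (rule finite_subset[OF _ finite_E]) (use cover in auto)

lemma finite_G: "finite G"
  using finite_E G_sub by (rule finite_subset[rotated])

lemma overlap_in_G:
  assumes "j < J" "k < J" "j \<noteq> k" "e \<in> Ej j" "e \<in> Ej k"
  shows "e \<in> G"
proof -
  have "e \<in> (\<Union>j<J. \<Union>k\<in>{j<..<J}. Ej j \<inter> Ej k)"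
  proof (cases "j < k")
    case True
    then show ?thesis using assms by (intro UN_I[of j] UN_I[of k]) auto
  next
    case False
    then have "k < j" using assms(3) by simp
    then show ?thesis using assms by (intro UN_I[of k] UN_I[of j]) auto
  qed
  then show ?thesis using Sigma_sub by (rule subsetD[rotated])
qed

lemma restr_glue_if_consistent_on_G:
  assumes "bvec J Ej v" and "\<And>j e. j < J \<Longrightarrow> e \<in> G \<Longrightarrow> e \<in> Ej j \<Longrightarrow> v j e = w e"
  shows "restr J Ej (glue J Ej v) = v"
proof (rule restr_glue)
  show "v j e = v k e" if "j < J" "k < J" "e \<in> Ej j" "e \<in> Ej k" for j k e
    using that assms(2) overlap_in_G[OF that(1,2) _ that(3,4)] by (cases "j = k") auto
qed (rule assms(1))

lemma vec_on_E_glue: "vec_on E (glue J Ej v)"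
  using vec_on_glue[where J = J and F = Ej] cover by simp

lemma RAR_injective:
  assumes "vec_on E x" "vec_on E y"
    and "restrT J Ej (Aop J Ej Am (restr J Ej x)) = restrT J Ej (Aop J Ej Am (restr J Ej y))"
  shows "x = y"
proof -
  have "vec_on E (restrT J Ej (Aop J Ej Am (restr J Ej y)))"
    using vec_on_restrT[where J = J and F = Ej] cover by simp
  then show ?thesis using A2 assms unfolding op_invertible_on_def by blast
qed

lemma hermitian_form_Top:
  assumes "j < J"
  shows "(\<Sum>e\<in>\<Gamma> j. cnj (v j e) * T v j e)
    = complex_of_real (qform (\<Gamma> j) (Tm j) (\<lambda>e. Re (v j e)) + qform (\<Gamma> j) (Tm j) (\<lambda>e. Im (v j e)))"
proof -
  have "(\<Sum>e\<in>\<Gamma> j. cnj (v j e) * T v j e)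
      = (\<Sum>e\<in>\<Gamma> j. \<Sum>e'\<in>\<Gamma> j. cnj (v j e) * (complex_of_real (Tm j e e') * v j e'))"
    using assms by (intro sum.cong refl) (simp add: Top_def bapply_def sum_distrib_left)
  also have "\<dots> = complex_of_real (qform (\<Gamma> j) (Tm j) (\<lambda>e. Re (v j e)) + qform (\<Gamma> j) (Tm j) (\<lambda>e. Im (v j e)))"
    using finite_G T_sym assms by (intro hermitian_form_eq_qform) (auto simp: Gj_def)
  finally show ?thesis .
qed

lemma sum_cnj_mult_BopT:
  assumes "j < J"
  shows "(\<Sum>e\<in>Ej j. cnj (v j e) * BopT J Ej G q j e) = (\<Sum>e\<in>\<Gamma> j. cnj (Bop J Ej G v j e) * q j e)"
proof -
  have "(\<Sum>e\<in>Ej j. cnj (v j e) * BopT J Ej G q j e) = (\<Sum>e\<in>Ej j \<inter> \<Gamma> j. cnj (v j e) * q j e)"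
    using assms finite_Ej[OF assms]
    by (simp add: BopT_def bmask_def sum.inter_restrict if_distrib cong: if_cong)
  also have "Ej j \<inter> \<Gamma> j = \<Gamma> j" by (auto simp: Gj_def)
  finally show ?thesis using assms by (simp add: Bop_def bmask_def)
qed

text \<open>This is where (A1) enters: for such v the sum in (A1) is i times the T-form of B v.\<close>
lemma Bop_zero_if_Aop_eq:
  assumes v: "bvec J Ej v" and Av: "Aop J Ej Am v = bscale \<i> (BopT J Ej G (T (Bop J Ej G v)))"
    and "j < J" "e \<in> \<Gamma> j"
  shows "Bop J Ej G v j e = 0"
proof -
  define form where "form j = qform (\<Gamma> j) (Tm j) (\<lambda>e. Re (Bop J Ej G v j e))
    + qform (\<Gamma> j) (Tm j) (\<lambda>e. Im (Bop J Ej G v j e))" for j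
  have "(\<Sum>j<J. \<Sum>e\<in>Ej j. cnj (v j e) * Aop J Ej Am v j e) = \<i> * complex_of_real (\<Sum>j<J. form j)"
    by (simp add: Av bscale_def cscale_def mult.left_commute[of _ \<i>] sum_distrib_left[symmetric]
        sum_cnj_mult_BopT hermitian_form_Top form_def)
  moreover have "Im (\<Sum>j<J. \<Sum>e\<in>Ej j. cnj (v j e) * Aop J Ej Am v j e) \<le> 0" using A1 v by blast
  ultimately have "Im (\<i> * complex_of_real (\<Sum>j<J. form j)) \<le> 0" by (simp only:)
  then have "(\<Sum>j<J. form j) \<le> 0" by (simp del: of_real_sum)
  then show ?thesis
    using sum_qforms_nonpos_imp_zero[OF T_pd _ assms(3,4)] unfolding form_def by blast
qed

lemma M_invertible: "op_invertible_on {v. bvec J Ej v} M"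
proof (rule op_invertible_on_bvecI)
  show "finite (Sigma {..<J} Ej)" by (auto intro: finite_Ej)
  fix v assume v: "bvec J Ej v" and "M v = 0"
  then have Av: "Aop J Ej Am v = bscale \<i> (BopT J Ej G (T (Bop J Ej G v)))"
    by (simp add: Mop_eq)
  note Bv0 = Bop_zero_if_Aop_eq[OF v Av]
  then have v0: "v j e = 0" if "j < J" "e \<in> G" "e \<in> Ej j" for j e
    using that by (simp add: Bop_def bmask_def Gj_def)
  have "Bop J Ej G v = 0"
    using Bv0 by (auto simp: Bop_def bmask_def fun_eq_iff)
  then have "Aop J Ej Am v = 0"
    unfolding Av by (simp add: Top_zero[unfolded zero_fun_def] BopT_def bmask_def bscale_def cscale_def zero_fun_def)
  moreover have v_glue: "restr J Ej (glue J Ej v) = v"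
    using restr_glue_if_consistent_on_G[OF v v0] .
  moreover have "restr J Ej 0 = 0" "Aop J Ej Am 0 = 0"
    by (simp_all add: restr_def Aop_def bapply_def fun_eq_iff)
  ultimately have "restrT J Ej (Aop J Ej Am (restr J Ej (glue J Ej v)))
      = restrT J Ej (Aop J Ej Am (restr J Ej 0))"
    by simp
  then have "glue J Ej v = 0"
    by (rule RAR_injective[OF vec_on_E_glue, rotated]) (simp add: vec_on_def)
  then show "v = 0" using v_glue \<open>restr J Ej 0 = 0\<close> by simp
qed (simp_all add: Mop_add Mop_bscale bvec_Mop)

lemma K_invertible: "op_invertible_on {x. vec_on G x} K"
proof (rule op_invertible_on_vec_onI[OF finite_G])
  fix x assume x: "vec_on G x" and "K x = 0"
  define form where "form j = qform (\<Gamma> j) (Tm j) (\<lambda>e. Re (restr J \<Gamma> x j e))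
    + qform (\<Gamma> j) (Tm j) (\<lambda>e. Im (restr J \<Gamma> x j e))" for j
  have "(\<Sum>e\<in>G. cnj (x e) * K x e) = (\<Sum>j<J. \<Sum>e\<in>\<Gamma> j. cnj (restr J \<Gamma> x j e) * T (restr J \<Gamma> x) j e)"
    by (subst sum_mult_restrT[OF finite_G]) (auto simp: Gj_def restr_def intro!: sum.cong)
  also have "\<dots> = complex_of_real (\<Sum>j<J. form j)"
    by (simp add: hermitian_form_Top form_def)
  finally have "complex_of_real (\<Sum>j<J. form j) = 0" using \<open>K x = 0\<close> by simp
  then have "(\<Sum>j<J. form j) \<le> 0" by (simp del: of_real_sum)
  then have x0: "restr J \<Gamma> x j e = 0" if "j < J" "e \<in> \<Gamma> j" for j e
    using sum_qforms_nonpos_imp_zero[OF T_pd _ that] unfolding form_def by blast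
  show "x = 0"
  proof
    fix e
    show "x e = 0 e"
    proof (cases "e \<in> G")
      case True
      then obtain j where "j < J" "e \<in> Ej j" using G_sub cover by auto
      then show ?thesis using x0[of j e] True by (simp add: restr_def Gj_def)
    next
      case False
      then show ?thesis using x by (simp add: vec_on_def)
    qed
  qed
next
  show "vec_on G (K x)" for x
    using vec_on_restrT[where J = J and F = \<Gamma>] by (auto simp: vec_on_def Gj_def)
qed (simp_all add: restr_add restr_cscale Top_add Top_bscale restrT_add restrT_bscale)

lemma Pop_eq: "Pop J Ej G Tm q = restr J \<Gamma> (op_inv {x. vec_on G x} K (restrT J \<Gamma> (T q)))"
  by (simp add: Pop_def)

lemma vec_on_G_restrT: "vec_on G (restrT J \<Gamma> q)"
  using vec_on_restrT[where J = J and F = \<Gamma>] by (auto simp: vec_on_def Gj_def)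

lemma Kinv_add:
  assumes "vec_on G x" "vec_on G y"
  shows "op_inv {x. vec_on G x} K (x + y) = op_inv {x. vec_on G x} K x + op_inv {x. vec_on G x} K y"
  using assms by (intro op_inv_add[OF K_invertible]) (auto simp: restr_add Top_add restrT_add vec_on_def)

lemma Kinv_cscale:
  assumes "vec_on G x"
  shows "op_inv {x. vec_on G x} K (cscale c x) = cscale c (op_inv {x. vec_on G x} K x)"
proof (rule op_inv_scale[OF K_invertible])
  show "K (cscale c y) = cscale c (K y)" for y by (simp add: restr_cscale Top_bscale restrT_bscale)
qed (use assms in \<open>auto simp: vec_on_def cscale_def\<close>)

lemma Pop_add: "Pop J Ej G Tm (q + r) = Pop J Ej G Tm q + Pop J Ej G Tm r"
  by (simp add: Pop_eq Top_add restrT_add Kinv_add vec_on_G_restrT restr_add)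

lemma Pop_bscale: "Pop J Ej G Tm (bscale c q) = bscale c (Pop J Ej G Tm q)"
  by (simp add: Pop_eq Top_bscale restrT_bscale Kinv_cscale vec_on_G_restrT restr_cscale)

lemma Pop_eqE:
  assumes "Pop J Ej G Tm q = r"
  obtains w where "restr J \<Gamma> w = r" "restrT J \<Gamma> (T q) = restrT J \<Gamma> (T r)"
proof
  let ?w = "op_inv {x. vec_on G x} K (restrT J \<Gamma> (T q))"
  show "restr J \<Gamma> ?w = r" using assms by (simp add: Pop_eq)
  have "K ?w = restrT J \<Gamma> (T q)" using apply_op_inv[OF K_invertible] vec_on_G_restrT by blast
  then show "restrT J \<Gamma> (T q) = restrT J \<Gamma> (T r)" using \<open>restr J \<Gamma> ?w = r\<close> by simp
qed

lemma Minv_add: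
  assumes "bvec J Ej v" "bvec J Ej w"
  shows "Minv J Ej G Am Tm (v + w) = Minv J Ej G Am Tm v + Minv J Ej G Am Tm w"
  unfolding Minv_def using assms
  by (intro op_inv_add[OF M_invertible]) (auto simp: Mop_add bvec_def)

lemma bvec_BopT: "bvec J Ej (BopT J Ej G q)"
  by (auto simp: bvec_def BopT_def bmask_def Gj_def)

lemma restrT_BopT: "restrT J Ej (BopT J Ej G q) = restrT J \<Gamma> q"
  unfolding BopT_def by (rule restrT_bmask) (auto simp: Gj_def)

lemma Pop_trace:
  assumes f: "bvec J Ej f"
    and p_sol: "(\<lambda>j e. p j e + PiOp J Ej G Tm (Sop J Ej G Am Tm p) j e)
                = (\<lambda>j e. - 2 * \<i> * PiOp J Ej G Tm (Bop J Ej G (Minv J Ej G Am Tm f)) j e)"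
  defines "u \<equiv> Minv J Ej G Am Tm (BopT J Ej G (T p) + f)"
  shows "Pop J Ej G Tm (p + bscale (2 * \<i>) (Bop J Ej G u)) = bscale \<i> (Bop J Ej G u)"
proof -
  define X where "X = Bop J Ej G (Minv J Ej G Am Tm (BopT J Ej G (T p)))"
  define Y where "Y = Bop J Ej G (Minv J Ej G Am Tm f)"
  have u: "Bop J Ej G u = X + Y"
    by (simp add: u_def X_def Y_def Minv_add[OF bvec_BopT f] Bop_def bmask_add)
  have S: "Sop J Ej G Am Tm p = p + bscale (2 * \<i>) X"
    by (simp add: Sop_def X_def fun_eq_iff bscale_def cscale_def)
  have "Pop J Ej G Tm (p + bscale (2 * \<i>) X) + bscale (2 * \<i>) (Pop J Ej G Tm Y) = bscale \<i> (X + Y)"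
  proof (intro ext)
    fix j e
    have "p j e + (2 * Pop J Ej G Tm (p + bscale (2 * \<i>) X) j e - (p j e + 2 * \<i> * X j e))
        = - 2 * \<i> * (2 * Pop J Ej G Tm Y j e - Y j e)"
      using fun_cong[OF fun_cong[OF p_sol, of j], of e]
      by (simp add: PiOp_def S Y_def bscale_def cscale_def)
    then have "2 * (Pop J Ej G Tm (p + bscale (2 * \<i>) X) j e + 2 * \<i> * Pop J Ej G Tm Y j e)
        = 2 * (\<i> * (X j e + Y j e))"
      by (simp add: algebra_simps)
    then have "Pop J Ej G Tm (p + bscale (2 * \<i>) X) j e + 2 * \<i> * Pop J Ej G Tm Y j e
        = \<i> * (X j e + Y j e)"
      by (metis mult_cancel_left zero_neq_numeral)
    then show "(Pop J Ej G Tm (p + bscale (2 * \<i>) X) + bscale (2 * \<i>) (Pop J Ej G Tm Y)) j e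
        = bscale \<i> (X + Y) j e"
      by (simp add: bscale_def cscale_def)
  qed
  moreover have "p + bscale (2 * \<i>) (Bop J Ej G u) = (p + bscale (2 * \<i>) X) + bscale (2 * \<i>) Y"
    by (simp add: u bscale_def cscale_def fun_eq_iff algebra_simps)
  ultimately show ?thesis by (simp only: u Pop_add Pop_bscale)
qed

theorem glued_solution:
  assumes f: "bvec J Ej f"
    and p_sol: "(\<lambda>j e. p j e + PiOp J Ej G Tm (Sop J Ej G Am Tm p) j e)
                = (\<lambda>j e. - 2 * \<i> * PiOp J Ej G Tm (Bop J Ej G (Minv J Ej G Am Tm f)) j e)"
  defines "u \<equiv> Minv J Ej G Am Tm (BopT J Ej G (T p) + f)"
  shows "restr J Ej (glue J Ej u) = u"
    and "restrT J Ej (Aop J Ej Am (restr J Ej (glue J Ej u))) = restrT J Ej f"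
proof -
  define Z where "Z = Bop J Ej G u"
  obtain w where w: "restr J \<Gamma> w = bscale \<i> Z"
    and TZ: "restrT J \<Gamma> (T (p + bscale (2 * \<i>) Z)) = restrT J \<Gamma> (T (bscale \<i> Z))"
    using Pop_eqE[OF Pop_trace[OF f p_sol]] unfolding u_def Z_def by blast
  have rhs: "bvec J Ej (BopT J Ej G (T p) + f)"
    using bvec_BopT f by (auto simp: bvec_def)
  have u: "bvec J Ej u" "M u = BopT J Ej G (T p) + f"
    using op_inv_in[OF M_invertible] apply_op_inv[OF M_invertible] rhs by (auto simp: u_def Minv_def)
  show glue: "restr J Ej (glue J Ej u) = u"
  proof (rule restr_glue_if_consistent_on_G[OF u(1)])
    show "u j e = - \<i> * w e" if "j < J" "e \<in> G" "e \<in> Ej j" for j e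
      using fun_cong[OF fun_cong[OF w, of j], of e] that
      by (simp add: restr_def Z_def Bop_def bmask_def Gj_def bscale_def cscale_def)
  qed
  have interface: "restrT J \<Gamma> (T p) + cscale \<i> (restrT J \<Gamma> (T Z)) = 0"
    using TZ by (simp add: Top_add Top_bscale restrT_add restrT_bscale cscale_def fun_eq_iff
        algebra_simps)
  have "Aop J Ej Am u = BopT J Ej G (T p) + f + bscale \<i> (BopT J Ej G (T Z))"
    using u(2) by (simp add: Mop_eq Z_def diff_eq_eq)
  then have "restrT J Ej (Aop J Ej Am u)
      = (restrT J \<Gamma> (T p) + cscale \<i> (restrT J \<Gamma> (T Z))) + restrT J Ej f"
    by (simp add: restrT_add restrT_bscale restrT_BopT algebra_simps)
  then show "restrT J Ej (Aop J Ej Am (restr J Ej (glue J Ej u))) = restrT J Ej f"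
    by (simp add: glue interface)
qed

end

theorem mainTheorem11:
  fixes E :: "'e set" and J :: nat and Ej :: "nat \<Rightarrow> 'e set" and G :: "'e set"
    and Am :: "nat \<Rightarrow> 'e \<Rightarrow> 'e \<Rightarrow> complex" and Tm :: "nat \<Rightarrow> 'e \<Rightarrow> 'e \<Rightarrow> real"
    and f p :: "nat \<Rightarrow> 'e \<Rightarrow> complex"
  assumes finE: "finite E"
    and cover: "E = (\<Union>j<J. Ej j)"
    and Sigma_sub: "(\<Union>j<J. \<Union>k\<in>{j<..<J}. Ej j \<inter> Ej k) \<subseteq> G"
    and G_sub: "G \<subseteq> E"
    and T_sym: "\<forall>j<J. \<forall>e\<in>Gj Ej G j. \<forall>e'\<in>Gj Ej G j. Tm j e e' = Tm j e' e"
    and T_pd: "\<forall>j<J. \<forall>x :: 'e \<Rightarrow> real. (\<forall>e. e \<notin> Gj Ej G j \<longrightarrow> x e = 0) \<and> x \<noteq> (\<lambda>_. 0)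
                 \<longrightarrow> (\<Sum>e\<in>Gj Ej G j. \<Sum>e'\<in>Gj Ej G j. x e * Tm j e e' * x e') > 0"
    and A1: "\<forall>v. bvec J Ej v \<longrightarrow> Im (\<Sum>j<J. \<Sum>e\<in>Ej j. cnj (v j e) * Aop J Ej Am v j e) \<le> 0"
    and A2: "op_invertible_on {x. vec_on E x} (\<lambda>x. restrT J Ej (Aop J Ej Am (restr J Ej x)))"
    and f_in: "bvec J Ej f"
    and p_in: "bvec J (Gj Ej G) p"
    and p_sol: "(\<lambda>j e. p j e + PiOp J Ej G Tm (Sop J Ej G Am Tm p) j e)
                = (\<lambda>j e. - 2 * \<i> * PiOp J Ej G Tm (Bop J Ej G (Minv J Ej G Am Tm f)) j e)"
  shows "let u = Minv J Ej G Am Tm (\<lambda>j e. BopT J Ej G (Top J Ej G Tm p) j e + f j e);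
             u\<Omega> = (\<lambda>e. restrT J Ej u e / of_nat (card {j. j < J \<and> e \<in> Ej j}))
         in (\<exists>x. vec_on E x \<and> restr J Ej x = u)
          \<and> vec_on E u\<Omega> \<and> restr J Ej u\<Omega> = u
          \<and> restrT J Ej (Aop J Ej Am (restr J Ej u\<Omega>)) = restrT J Ej f
          \<and> (\<forall>w. vec_on E w \<and> restrT J Ej (Aop J Ej Am (restr J Ej w)) = restrT J Ej f \<longrightarrow> w = u\<Omega>)"
proof -
  interpret scattering_data E J Ej G Am Tm
    using finE cover Sigma_sub G_sub T_sym T_pd A1 A2
    by unfold_locales (simp_all add: pos_def_on_def qform_def)
  define u where "u = Minv J Ej G Am Tm (BopT J Ej G (Top J Ej G Tm p) + f)"
  have u_eq: "Minv J Ej G Am Tm (\<lambda>j e. BopT J Ej G (Top J Ej G Tm p) j e + f j e) = u"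
    by (simp add: u_def plus_fun_def)
  note glued = glued_solution[OF f_in p_sol, folded u_def]
  have "w = glue J Ej u"
    if "vec_on E w" "restrT J Ej (Aop J Ej Am (restr J Ej w)) = restrT J Ej f" for w
    using RAR_injective[OF that(1) vec_on_E_glue] that(2) glued(2) by simp
  then show ?thesis
    unfolding Let_def u_eq glue_def[symmetric] using glued vec_on_E_glue by blast
qed

end
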